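(* Let $A$ be a row-finite $\omega\times\omega$ complex matrix, $g\in\mathbb{C}^{\omega}$, and let $Q$ be a nonsingular row-finite matrix such that $H=QA=(h_{ij})$ is in quasi-Hermite form. Let $W$ be the set of indices of zero rows of $H$, $J=\{j_0<j_1<\cdots\}=\omega\setminus W$ the indices of nonzero rows, $\mu_i=\ell(H_{j_i})$, and $\mathbf{k}=Qg$. Then: (a) the system $Ay=g$ (with unknown $y\in\mathbb{C}^\omega$) has a solution if and only if $\mathbf{k}_w=0$ for all $w\in W$; (b) in that case, $y\in\mathbb{C}^{\omega}$ solves $Ay=g$ if and only if for every $i$ with $j_i\in J$, $$y_{\mu_i}=\mathbf{k}_{j_i}-\sum_{k=0}^{\mu_i-1}h_{j_ik}y_k,$$ where the coordinates $y_s$, $s\in\omega\setminus\{\mu_0,\mu_1,\dots\}$, are arbitrary (and only these occur with possibly nonzero coefficients in the sums). In particular the homogeneous system $Ay=0$ has a nontrivial solution if and only if $\operatorname{def}(A)>0$.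
   Context: $\omega=\{0,1,2,\dots\}$; $\mathbb{C}^{\omega}$ is the space of all complex sequences (written as columns); for a row-finite matrix $A$, $(Ay)_n=\sum_k a_{nk}y_k$ (a finite sum). Row-finite: each row has finitely many nonzero entries; nonsingular: invertible in the algebra of row-finite matrices. Length $\ell(x)$ of a finitely supported sequence $x\neq 0$ is its largest index with nonzero coordinate. Quasi-Hermite form (QHF): with $J$ the indices of nonzero rows and $\ell_j=\ell(H_j)$, (i) $j<j'$ in $J$ implies $\ell_j<\ell_{j'}$; (ii) $h_{j\ell_j}=1$; (iii) $h_{m\ell_j}=0$ for all $m\neq j$. $\operatorname{def}(A)$ is the codimension of the row space of $A$ in the space of finitely supported sequences. *)

theory Defs
  imports Complex_Main "HOL-Library.Extended_Nat"
begin

type_synonym cmat = "nat \<Rightarrow> nat \<Rightarrow> complex"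
type_synonym cseq = "nat \<Rightarrow> complex"

definition row_finite :: "cmat \<Rightarrow> bool" where
  "row_finite A \<longleftrightarrow> (\<forall>i. finite {k. A i k \<noteq> 0})"

definition mat_vec :: "cmat \<Rightarrow> cseq \<Rightarrow> cseq" where
  "mat_vec A y = (\<lambda>n. \<Sum>k\<in>{k. A n k \<noteq> 0}. A n k * y k)"

definition mat_mult :: "cmat \<Rightarrow> cmat \<Rightarrow> cmat" where
  "mat_mult A B = (\<lambda>i k. \<Sum>j\<in>{j. A i j \<noteq> 0}. A i j * B j k)"

definition id_mat :: cmat where
  "id_mat = (\<lambda>i k. if i = k then 1 else 0)"

definition nonsingular :: "cmat \<Rightarrow> bool" where
  "nonsingular Q \<longleftrightarrow> row_finite Q \<and>
     (\<exists>R. row_finite R \<and> mat_mult Q R = id_mat \<and> mat_mult R Q = id_mat)"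

definition fin_supp :: "cseq set" where
  "fin_supp = {x. finite {k. x k \<noteq> 0}}"

text \<open>Length of a finitely supported nonzero sequence: largest index with nonzero coordinate.\<close>
definition seq_len :: "cseq \<Rightarrow> nat" where
  "seq_len x = Max {k. x k \<noteq> 0}"

definition zero_rows :: "cmat \<Rightarrow> nat set" where
  "zero_rows H = {j. H j = (\<lambda>_. 0)}"

definition nonzero_rows :: "cmat \<Rightarrow> nat set" where
  "nonzero_rows H = {j. H j \<noteq> (\<lambda>_. 0)}"

definition quasi_hermite :: "cmat \<Rightarrow> bool" where
  "quasi_hermite H \<longleftrightarrow> row_finite H \<and>
     (\<forall>j\<in>nonzero_rows H. \<forall>j'\<in>nonzero_rows H. j < j' \<longrightarrow> seq_len (H j) < seq_len (H j')) \<and>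
     (\<forall>j\<in>nonzero_rows H. H j (seq_len (H j)) = 1) \<and>
     (\<forall>j\<in>nonzero_rows H. \<forall>m. m \<noteq> j \<longrightarrow> H m (seq_len (H j)) = 0)"

definition lin_span :: "cseq set \<Rightarrow> cseq set" where
  "lin_span V = {x. \<exists>F c. finite F \<and> F \<subseteq> V \<and> x = (\<lambda>k. \<Sum>v\<in>F. c v * v k)}"

definition row_space :: "cmat \<Rightarrow> cseq set" where
  "row_space A = lin_span (range A)"

text \<open>def(A): codimension of the row space of A in the space of finitely supported
  sequences, i.e. the least number of finitely supported sequences needed to extend
  the row space to all of fin_supp (infinity if no finite number suffices).\<close>
definition deficiency :: "cmat \<Rightarrow> enat" where
  "deficiency A = Inf {enat (card S) | S. finite S \<and> S \<subseteq> fin_supp \<and>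
                          lin_span (row_space A \<union> S) = fin_supp}"

end

theory Submission
  imports Defs
begin

(* 1. Row-finite matrix algebra: matrix-vector products may be computed over any
      finite superset of a row's support, the product is associative, and hence
      multiplying on the left by a nonsingular Q does not change the solution set:
      A y = g iff H y = Q g.
   2. Systems in quasi-Hermite form: a nonzero row j of H reads
      y_(l j) + sum_(k < l j) h_jk y_k, so H y = b iff b vanishes on the zero rows
      and every pivot coordinate y_(l j) is given by the back-substitution formula.
      Since pivot columns are zero outside their pivot row, the right-hand sides
      involve only free coordinates; hence the free coordinates can be prescribed
      arbitrarily and determine a unique solution.
   3. The homogeneous system: a nonzero kernel vector is orthogonal to the row space,
      so the row space is proper; conversely, if every column is a pivot column the
      rows of H are unit vectors and span all finitely supported sequences.  A proper
      row space is exactly positive deficiency. *)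

section \<open>Row-finite matrix algebra\<close>

lemma mat_vec_eq_sum:
  assumes "finite K" "{k. A n k \<noteq> 0} \<subseteq> K"
  shows "mat_vec A y n = (\<Sum>k\<in>K. A n k * y k)"
  unfolding mat_vec_def by (rule sum.mono_neutral_left) (use assms in auto)

lemma mat_mult_row_support:
  "{k. mat_mult Q A n k \<noteq> 0} \<subseteq> (\<Union>j\<in>{j. Q n j \<noteq> 0}. {k. A j k \<noteq> 0})"
proof
  fix k assume "k \<in> {k. mat_mult Q A n k \<noteq> 0}"
  hence "(\<Sum>j\<in>{j. Q n j \<noteq> 0}. Q n j * A j k) \<noteq> 0" by (simp add: mat_mult_def)
  then obtain j where "j \<in> {j. Q n j \<noteq> 0}" "Q n j * A j k \<noteq> 0"
    by (meson sum.neutral)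
  thus "k \<in> (\<Union>j\<in>{j. Q n j \<noteq> 0}. {k. A j k \<noteq> 0})" by auto
qed

lemma mat_vec_mat_mult:
  assumes "row_finite Q" "row_finite A"
  shows "mat_vec Q (mat_vec A y) = mat_vec (mat_mult Q A) y"
proof
  fix n
  define S where "S = {j. Q n j \<noteq> 0}"
  define K where "K = (\<Union>j\<in>S. {k. A j k \<noteq> 0})"
  have fin_S: "finite S" using assms(1) unfolding row_finite_def S_def by auto
  have fin_K: "finite K" using assms fin_S unfolding row_finite_def K_def by auto
  have "mat_vec Q (mat_vec A y) n = (\<Sum>j\<in>S. Q n j * (\<Sum>k\<in>K. A j k * y k))"
    unfolding mat_vec_def[of Q] S_def[symmetric]
    by (rule sum.cong[OF refl], subst mat_vec_eq_sum[OF fin_K]) (auto simp: K_def S_def)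
  also have "\<dots> = (\<Sum>k\<in>K. \<Sum>j\<in>S. Q n j * A j k * y k)"
    by (subst sum.swap) (simp add: sum_distrib_left mult.assoc)
  also have "\<dots> = (\<Sum>k\<in>K. mat_mult Q A n k * y k)"
    by (simp add: mat_mult_def S_def sum_distrib_right)
  also have "\<dots> = mat_vec (mat_mult Q A) y n"
    using mat_mult_row_support fin_K by (intro mat_vec_eq_sum[symmetric]) (auto simp: K_def S_def)
  finally show "mat_vec Q (mat_vec A y) n = mat_vec (mat_mult Q A) y n" .
qed

text \<open>The identity matrix acts trivially; with associativity this makes Q injective.\<close>
lemma mat_vec_id: "mat_vec id_mat x = x"
proof
  fix n
  have "{k. id_mat n k \<noteq> 0} = {n}" by (auto simp: id_mat_def)
  thus "mat_vec id_mat x n = x n" by (simp add: mat_vec_def id_mat_def)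
qed

lemma solutions_left_mult_nonsingular:
  assumes "row_finite A" "nonsingular Q"
  shows "mat_vec A y = g \<longleftrightarrow> mat_vec (mat_mult Q A) y = mat_vec Q g"
proof -
  obtain R where R: "row_finite R" "mat_mult R Q = id_mat" and Q: "row_finite Q"
    using assms(2) unfolding nonsingular_def by blast
  have left_inverse: "mat_vec R (mat_vec Q x) = x" for x
    using mat_vec_mat_mult[OF R(1) Q] R(2) mat_vec_id by simp
  have "mat_vec (mat_mult Q A) y = mat_vec Q g \<longleftrightarrow> mat_vec Q (mat_vec A y) = mat_vec Q g"
    by (simp add: mat_vec_mat_mult[OF Q assms(1)])
  also have "\<dots> \<longleftrightarrow> mat_vec A y = g"
    by (metis left_inverse)
  finally show ?thesis by simp
qed

section \<open>Systems in quasi-Hermite form\<close>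

abbreviation pivots :: "cmat \<Rightarrow> nat set" where
  "pivots H \<equiv> (\<lambda>j. seq_len (H j)) ` nonzero_rows H"

lemma qh_row:
  assumes "quasi_hermite H" "j \<in> nonzero_rows H"
  shows "H j (seq_len (H j)) = 1" and "\<And>k. seq_len (H j) < k \<Longrightarrow> H j k = 0"
proof -
  show "H j (seq_len (H j)) = 1" using assms by (simp add: quasi_hermite_def)
  have fin: "finite {k. H j k \<noteq> 0}"
    using assms(1) by (simp add: quasi_hermite_def row_finite_def)
  show "H j k = 0" if "seq_len (H j) < k" for k
  proof (rule ccontr)
    assume "H j k \<noteq> 0"
    hence "k \<le> seq_len (H j)" unfolding seq_len_def using fin by (simp add: Max_ge)
    thus False using that by simp
  qed
qed

lemma mat_vec_qh_row:
  assumes "quasi_hermite H" "j \<in> nonzero_rows H"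
  shows "mat_vec H y j = y (seq_len (H j)) + (\<Sum>k<seq_len (H j). H j k * y k)"
proof -
  let ?l = "seq_len (H j)"
  have "mat_vec H y j = (\<Sum>k<Suc ?l. H j k * y k)"
    using qh_row(2)[OF assms] by (intro mat_vec_eq_sum) (auto simp: not_less_eq[symmetric])
  thus ?thesis using qh_row(1)[OF assms] by simp
qed

lemma qh_system_iff:
  assumes "quasi_hermite H"
  shows "mat_vec H y = b \<longleftrightarrow> (\<forall>w\<in>zero_rows H. b w = 0) \<and>
     (\<forall>j\<in>nonzero_rows H. y (seq_len (H j)) = b j - (\<Sum>k<seq_len (H j). H j k * y k))"
proof -
  have zero: "w \<in> zero_rows H \<Longrightarrow> mat_vec H y w = 0" for w
    by (simp add: zero_rows_def mat_vec_def)
  have rows: "n \<in> zero_rows H \<or> n \<in> nonzero_rows H" for n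
    by (simp add: zero_rows_def nonzero_rows_def)
  have "mat_vec H y = b \<longleftrightarrow> (\<forall>w\<in>zero_rows H. b w = 0) \<and> (\<forall>j\<in>nonzero_rows H. mat_vec H y j = b j)"
    using zero rows by (auto simp: fun_eq_iff) metis
  thus ?thesis
    using mat_vec_qh_row[OF assms, of _ y] by (auto simp: eq_diff_eq)
qed

lemma qh_pivot_inj:
  assumes "quasi_hermite H"
  shows "inj_on (\<lambda>j. seq_len (H j)) (nonzero_rows H)"
  using assms unfolding quasi_hermite_def by (intro inj_onI) (metis less_irrefl linorder_neqE_nat)

lemma qh_pivot_column_zero:
  assumes "quasi_hermite H" "j \<in> nonzero_rows H" "k < seq_len (H j)" "k \<in> pivots H"
  shows "H j k = 0"
proof -
  obtain j' where j': "j' \<in> nonzero_rows H" "k = seq_len (H j')" using assms(4) by auto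
  hence "j' \<noteq> j" using assms(3) by auto
  thus ?thesis using assms(1) j' unfolding quasi_hermite_def by metis
qed

lemma qh_sum_only_free:
  assumes "quasi_hermite H" "j \<in> nonzero_rows H" "\<forall>s. s \<notin> pivots H \<longrightarrow> y s = z s"
  shows "(\<Sum>k<seq_len (H j). H j k * y k) = (\<Sum>k<seq_len (H j). H j k * z k)"
  using assms qh_pivot_column_zero by (intro sum.cong) fastforce+

text \<open>A compatible system in quasi-Hermite form has exactly one solution with
  prescribed free coordinates z: the pivot coordinates are obtained from z by
  back substitution.\<close>
lemma qh_unique_solution:
  assumes qh: "quasi_hermite H" and compatible: "\<forall>w\<in>zero_rows H. b w = 0"
  shows "\<exists>!y. mat_vec H y = b \<and> (\<forall>s. s \<notin> pivots H \<longrightarrow> y s = z s)"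
proof -
  let ?J = "nonzero_rows H" and ?l = "\<lambda>j. seq_len (H j)"
  define y where "y s = (if s \<in> pivots H then (let j = (SOME j. j \<in> ?J \<and> ?l j = s) in
       b j - (\<Sum>k<s. H j k * z k)) else z s)" for s
  have y_free: "\<forall>s. s \<notin> pivots H \<longrightarrow> y s = z s" by (simp add: y_def)
  have y_pivot: "y (?l j) = b j - (\<Sum>k<?l j. H j k * z k)" if "j \<in> ?J" for j
  proof -
    have "(SOME j'. j' \<in> ?J \<and> ?l j' = ?l j) = j"
      using that qh_pivot_inj[OF qh] by (intro some_equality) (auto dest: inj_onD)
    thus ?thesis using that by (simp add: y_def)
  qed
  have "mat_vec H y = b"
    unfolding qh_system_iff[OF qh] using compatible y_pivot qh_sum_only_free[OF qh _ y_free] by simp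
  moreover have "y' = y" if y': "mat_vec H y' = b" "\<forall>s. s \<notin> pivots H \<longrightarrow> y' s = z s" for y'
  proof
    fix s show "y' s = y s"
    proof (cases "s \<in> pivots H")
      case True
      then obtain j where j: "j \<in> ?J" "s = ?l j" by auto
      have "y' s = b j - (\<Sum>k<?l j. H j k * y' k)" using y' j unfolding qh_system_iff[OF qh] by blast
      also have "\<dots> = b j - (\<Sum>k<?l j. H j k * z k)" using qh_sum_only_free[OF qh j(1)] y' by simp
      finally show ?thesis using y_pivot j by simp
    qed (use y' y_free in simp)
  qed
  ultimately show ?thesis using y_free by blast
qed

lemma qh_solvable_iff:
  assumes "quasi_hermite H"
  shows "(\<exists>y. mat_vec H y = b) \<longleftrightarrow> (\<forall>w\<in>zero_rows H. b w = 0)"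
  using qh_system_iff[OF assms] qh_unique_solution[OF assms, of b "\<lambda>_. 0"] by blast

section \<open>Spans and deficiency\<close>

text \<open>Finite linear combinations of an indexed family in V lie in the span of V (the
  family may repeat vectors, so coefficients of equal vectors are merged).\<close>
lemma lin_span_comb:
  assumes "finite S" "\<forall>i\<in>S. f i \<in> V"
  shows "(\<lambda>k. \<Sum>i\<in>S. a i * f i k) \<in> lin_span V"
proof -
  define c where "c v = (\<Sum>i\<in>{i\<in>S. f i = v}. a i)" for v
  have "(\<Sum>i\<in>S. a i * f i k) = (\<Sum>v\<in>f ` S. c v * v k)" for k
  proof -
    have "(\<Sum>i\<in>S. a i * f i k) = (\<Sum>v\<in>f ` S. \<Sum>i\<in>{i\<in>S. f i = v}. a i * f i k)"
      by (rule sum.image_gen[OF assms(1)])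
    also have "\<dots> = (\<Sum>v\<in>f ` S. c v * v k)"
      unfolding c_def sum_distrib_right by (intro sum.cong) auto
    finally show ?thesis .
  qed
  thus ?thesis unfolding lin_span_def using assms by blast
qed

lemma lin_span_fin_supp:
  assumes "V \<subseteq> fin_supp" shows "lin_span V \<subseteq> fin_supp"
proof
  fix x assume "x \<in> lin_span V"
  then obtain F c where F: "finite F" "F \<subseteq> V" "x = (\<lambda>k. \<Sum>v\<in>F. c v * v k)"
    unfolding lin_span_def by blast
  have "{k. x k \<noteq> 0} \<subseteq> (\<Union>v\<in>F. {k. v k \<noteq> 0})"
  proof
    fix k assume "k \<in> {k. x k \<noteq> 0}"
    then obtain v where "v \<in> F" "c v * v k \<noteq> 0" using F(3) by (auto elim: sum.not_neutral_contains_not_neutral)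
    thus "k \<in> (\<Union>v\<in>F. {k. v k \<noteq> 0})" by auto
  qed
  moreover have "finite (\<Union>v\<in>F. {k. v k \<noteq> 0})" using F assms by (auto simp: fin_supp_def)
  ultimately show "x \<in> fin_supp" by (simp add: fin_supp_def finite_subset)
qed

lemma mat_mult_row_in_span:
  assumes "row_finite Q" shows "mat_mult Q A j \<in> lin_span (range A)"
proof -
  have "mat_mult Q A j = (\<lambda>k. \<Sum>i\<in>{i. Q j i \<noteq> 0}. Q j i * A i k)" by (simp add: mat_mult_def)
  also have "\<dots> \<in> lin_span (range A)"
    using assms by (intro lin_span_comb) (auto simp: row_finite_def)
  finally show ?thesis .
qed

text \<open>The deficiency is positive exactly when the row space is a proper subspace of the
  finitely supported sequences (no extension vectors are needed otherwise).\<close>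
lemma deficiency_pos_iff: "deficiency A > 0 \<longleftrightarrow> lin_span (row_space A) \<noteq> fin_supp"
proof -
  define D where "D = {enat (card S) | S. finite S \<and> S \<subseteq> fin_supp \<and>
                                        lin_span (row_space A \<union> S) = fin_supp}"
  have "deficiency A = 0 \<longleftrightarrow> 0 \<in> D"
  proof
    assume "deficiency A = 0"
    hence inf: "Inf D = 0" by (simp add: deficiency_def D_def)
    hence "D \<noteq> {}" by (metis Inf_empty top_enat_def infinity_ne_i0)
    then obtain d where "d \<in> D" by blast
    hence "(LEAST x. x \<in> D) \<in> D" by (rule LeastI)
    thus "0 \<in> D" using inf \<open>D \<noteq> {}\<close> by (simp add: Inf_enat_def)
  next
    assume "0 \<in> D"
    hence "Inf D \<le> 0" by (rule Inf_lower)
    thus "deficiency A = 0" by (simp add: deficiency_def D_def)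
  qed
  also have "\<dots> \<longleftrightarrow> lin_span (row_space A) = fin_supp"
  proof
    assume "0 \<in> D"
    then obtain S where "finite S" "card S = 0" "lin_span (row_space A \<union> S) = fin_supp"
      unfolding D_def zero_enat_def by auto
    thus "lin_span (row_space A) = fin_supp" by simp
  next
    assume "lin_span (row_space A) = fin_supp"
    hence "enat (card {}) \<in> D" unfolding D_def by (intro CollectI exI[of _ "{}"]) simp
    thus "0 \<in> D" by (simp add: zero_enat_def)
  qed
  finally show ?thesis by (simp add: zero_less_iff_neq_zero)
qed

section \<open>The homogeneous system\<close>

text \<open>x is a finitely supported sequence orthogonal to y (the pairing is a finite sum).\<close>
definition orthogonal :: "cseq \<Rightarrow> cseq \<Rightarrow> bool" where
  "orthogonal y x \<longleftrightarrow> x \<in> fin_supp \<and>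
     (\<forall>K. finite K \<longrightarrow> {k. x k \<noteq> 0} \<subseteq> K \<longrightarrow> (\<Sum>k\<in>K. x k * y k) = 0)"

definition unit_vec :: "nat \<Rightarrow> cseq" where
  "unit_vec s = (\<lambda>k. if k = s then 1 else 0)"

lemma orthogonal_lin_span:
  assumes "V \<subseteq> {x. orthogonal y x}" shows "lin_span V \<subseteq> {x. orthogonal y x}"
proof
  fix x assume x: "x \<in> lin_span V"
  then obtain F c where F: "finite F" "F \<subseteq> V" "x = (\<lambda>k. \<Sum>v\<in>F. c v * v k)"
    unfolding lin_span_def by blast
  have V_fin: "V \<subseteq> fin_supp" using assms by (auto simp: orthogonal_def)
  have "(\<Sum>k\<in>K. x k * y k) = 0" if K: "finite K" "{k. x k \<noteq> 0} \<subseteq> K" for K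
  proof -
    define K' where "K' = K \<union> (\<Union>v\<in>F. {k. v k \<noteq> 0})"
    have fin_K': "finite K'" using K F V_fin by (auto simp: K'_def fin_supp_def)
    have "(\<Sum>k\<in>K. x k * y k) = (\<Sum>k\<in>K'. x k * y k)"
      using fin_K' K by (intro sum.mono_neutral_left) (auto simp: K'_def)
    also have "\<dots> = (\<Sum>v\<in>F. c v * (\<Sum>k\<in>K'. v k * y k))"
      by (simp add: F(3) sum_distrib_right sum_distrib_left mult.assoc sum.swap[of _ K'])
    also have "\<dots> = 0"
    proof (intro sum.neutral ballI)
      fix v assume v: "v \<in> F"
      hence "orthogonal y v" using F assms by auto
      moreover have "{k. v k \<noteq> 0} \<subseteq> K'" using v by (auto simp: K'_def)
      ultimately show "c v * (\<Sum>k\<in>K'. v k * y k) = 0" using fin_K' by (simp add: orthogonal_def)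
    qed
    finally show ?thesis .
  qed
  moreover have "x \<in> fin_supp" using lin_span_fin_supp[OF V_fin] x by blast
  ultimately show "x \<in> {x. orthogonal y x}" by (simp add: orthogonal_def)
qed

text \<open>A nonzero kernel vector y is orthogonal to the whole row space, but not to the
  unit vector at a coordinate where y is nonzero; so the row space is proper.\<close>
lemma kernel_nonzero_imp_span_proper:
  assumes "row_finite A" "y \<noteq> (\<lambda>_. 0)" "mat_vec A y = (\<lambda>_. 0)"
  shows "lin_span (row_space A) \<noteq> fin_supp"
proof
  assume span_all: "lin_span (row_space A) = fin_supp"
  have "orthogonal y (A i)" for i
  proof -
    have "(\<Sum>k\<in>K. A i k * y k) = 0" if "finite K" "{k. A i k \<noteq> 0} \<subseteq> K" for K
      using mat_vec_eq_sum[of K A i y] that assms(3) by (simp add: fun_eq_iff)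
    thus ?thesis using assms(1) by (simp add: orthogonal_def row_finite_def fin_supp_def)
  qed
  hence "lin_span (row_space A) \<subseteq> {x. orthogonal y x}"
    unfolding row_space_def by (intro orthogonal_lin_span) blast
  moreover have "unit_vec s \<in> fin_supp" for s by (simp add: fin_supp_def unit_vec_def)
  ultimately have orth: "orthogonal y (unit_vec s)" for s
    using span_all by blast
  have "y s = 0" for s
  proof -
    have "(\<Sum>k\<in>{s}. unit_vec s k * y k) = 0"
      using orth[of s] unfolding orthogonal_def by (elim conjE allE[of _ "{s}"]) (simp add: unit_vec_def)
    thus ?thesis by (simp add: unit_vec_def)
  qed
  thus False using assms(2) by auto
qed

lemma qh_all_pivots_unit_rows:
  assumes "quasi_hermite H" "\<forall>s. s \<in> pivots H" "j \<in> nonzero_rows H"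
  shows "H j = unit_vec (seq_len (H j))"
proof
  fix k
  consider "k < seq_len (H j)" | "k = seq_len (H j)" | "seq_len (H j) < k" by linarith
  thus "H j k = unit_vec (seq_len (H j)) k"
    using qh_pivot_column_zero[OF assms(1,3)] qh_row[OF assms(1,3)] assms(2)
    by cases (auto simp: unit_vec_def)
qed

lemma unit_vecs_span:
  assumes "\<forall>s. unit_vec s \<in> V" shows "fin_supp \<subseteq> lin_span V"
proof
  fix x assume "x \<in> fin_supp"
  hence fin: "finite {k. x k \<noteq> 0}" by (simp add: fin_supp_def)
  have "x = (\<lambda>k. \<Sum>s\<in>{k. x k \<noteq> 0}. x s * unit_vec s k)"
    using fin by (auto simp: unit_vec_def fun_eq_iff if_distrib[of "(*) _"] sum.delta cong: if_cong)
  also have "\<dots> \<in> lin_span V"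
    using fin assms by (intro lin_span_comb) auto
  finally show "x \<in> lin_span V" .
qed

lemma span_proper_imp_free_column:
  assumes "row_finite A" "nonsingular Q" "quasi_hermite (mat_mult Q A)"
    and "lin_span (row_space A) \<noteq> fin_supp"
  shows "\<exists>s. s \<notin> pivots (mat_mult Q A)"
proof (rule ccontr)
  let ?H = "mat_mult Q A"
  assume "\<nexists>s. s \<notin> pivots ?H"
  hence all: "\<forall>s. s \<in> pivots ?H" by blast
  have Q: "row_finite Q" using assms(2) by (simp add: nonsingular_def)
  have "unit_vec s \<in> row_space A" for s
  proof -
    obtain j where j: "j \<in> nonzero_rows ?H" "s = seq_len (?H j)" using all by blast
    show ?thesis
      using qh_all_pivots_unit_rows[OF assms(3) all j(1)] mat_mult_row_in_span[OF Q, of A j] j(2)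
      by (simp add: row_space_def)
  qed
  hence "fin_supp \<subseteq> lin_span (row_space A)" by (intro unit_vecs_span) blast
  moreover have "range A \<subseteq> fin_supp" using assms(1) by (auto simp: row_finite_def fin_supp_def)
  hence "lin_span (row_space A) \<subseteq> fin_supp"
    unfolding row_space_def by (intro lin_span_fin_supp)
  ultimately show False using assms(4) by blast
qed

text \<open>A free column s gives a kernel vector: the solution of H y = 0 with free
  coordinates equal to the unit vector at s.\<close>
lemma free_column_imp_kernel_nonzero:
  assumes "row_finite A" "nonsingular Q" "quasi_hermite (mat_mult Q A)"
    and "s \<notin> pivots (mat_mult Q A)"
  shows "\<exists>y. y \<noteq> (\<lambda>_. 0) \<and> mat_vec A y = (\<lambda>_. 0)"
proof -
  obtain y where y: "mat_vec (mat_mult Q A) y = (\<lambda>_. 0)"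
    "\<forall>t. t \<notin> pivots (mat_mult Q A) \<longrightarrow> y t = unit_vec s t"
    using qh_unique_solution[OF assms(3), of "\<lambda>_. 0" "unit_vec s"] by auto
  have "mat_vec Q (\<lambda>_. 0) = (\<lambda>_. 0)" by (simp add: mat_vec_def)
  hence "mat_vec A y = (\<lambda>_. 0)" using solutions_left_mult_nonsingular[OF assms(1,2)] y(1) by metis
  moreover have "y s = 1" using y(2) assms(4) by (simp add: unit_vec_def)
  ultimately show ?thesis by (metis zero_neq_one)
qed

text \<open>The homogeneous part of the theorem: a nontrivial kernel exists iff def(A) > 0,
  via the chain kernel -> proper row space -> free column -> kernel.\<close>
lemma kernel_nonzero_iff_deficiency:
  assumes "row_finite A" "nonsingular Q" "quasi_hermite (mat_mult Q A)"
  shows "(\<exists>y. y \<noteq> (\<lambda>_. 0) \<and> mat_vec A y = (\<lambda>_. 0)) \<longleftrightarrow> deficiency A > 0"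
  using kernel_nonzero_imp_span_proper[OF assms(1)] span_proper_imp_free_column[OF assms]
    free_column_imp_kernel_nonzero[OF assms] deficiency_pos_iff by blast

theorem mainTheorem4:
  fixes A Q :: cmat and g :: cseq
  assumes "row_finite A"
    and "nonsingular Q"
    and "quasi_hermite (mat_mult Q A)"
  defines "H \<equiv> mat_mult Q A"
    and "W \<equiv> zero_rows (mat_mult Q A)"
    and "J \<equiv> nonzero_rows (mat_mult Q A)"
    and "kk \<equiv> mat_vec Q g"
  shows "((\<exists>y. mat_vec A y = g) \<longleftrightarrow> (\<forall>w\<in>W. kk w = 0))
    \<and> ((\<exists>y. mat_vec A y = g) \<longrightarrow>
         (\<forall>y. mat_vec A y = g \<longleftrightarrow>
              (\<forall>j\<in>J. y (seq_len (H j)) = kk j - (\<Sum>k<seq_len (H j). H j k * y k)))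
       \<and> (\<forall>j\<in>J. \<forall>k<seq_len (H j). k \<in> (\<lambda>j. seq_len (H j)) ` J \<longrightarrow> H j k = 0)
       \<and> (\<forall>z. \<exists>!y. mat_vec A y = g \<and>
              (\<forall>s. s \<notin> (\<lambda>j. seq_len (H j)) ` J \<longrightarrow> y s = z s)))
    \<and> ((\<exists>y. y \<noteq> (\<lambda>_. 0) \<and> mat_vec A y = (\<lambda>_. 0)) \<longleftrightarrow> deficiency A > 0)"
proof -
  have qh: "quasi_hermite H" using assms(3) by (simp add: H_def)
  have WJ: "W = zero_rows H" "J = nonzero_rows H" by (simp_all add: W_def J_def H_def)
  have system: "mat_vec A y = g \<longleftrightarrow> mat_vec H y = kk" for y
    unfolding H_def kk_def by (rule solutions_left_mult_nonsingular[OF assms(1,2)])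
  have solvable: "(\<exists>y. mat_vec A y = g) \<longleftrightarrow> (\<forall>w\<in>W. kk w = 0)"
    unfolding system WJ by (rule qh_solvable_iff[OF qh])
  have back_subst: "mat_vec A y = g \<longleftrightarrow>
     (\<forall>j\<in>J. y (seq_len (H j)) = kk j - (\<Sum>k<seq_len (H j). H j k * y k))"
    if "\<forall>w\<in>W. kk w = 0" for y
    using that unfolding system WJ qh_system_iff[OF qh] by simp
  have free_choice: "\<exists>!y. mat_vec A y = g \<and> (\<forall>s. s \<notin> (\<lambda>j. seq_len (H j)) ` J \<longrightarrow> y s = z s)"
    if "\<forall>w\<in>W. kk w = 0" for z
    using that unfolding system WJ by (rule qh_unique_solution[OF qh])
  have pivot_columns: "\<forall>j\<in>J. \<forall>k<seq_len (H j). k \<in> (\<lambda>j. seq_len (H j)) ` J \<longrightarrow> H j k = 0"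
    unfolding WJ using qh_pivot_column_zero[OF qh] by blast
  show ?thesis
    unfolding solvable using back_subst free_choice pivot_columns
      kernel_nonzero_iff_deficiency[OF assms(1-3)] by blast
qed

end
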